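(* Consider $n$ agents indexed by $\mathcal{V}=\{1,\dots,n\}$ communicating over a fixed directed graph $\mathcal{G}(\mathcal{A})$ with nonnegative weight matrix $\mathcal{A}=(a_{ij})_{n\times n}$, where $a_{ij}>0$ if and only if agent $i$ receives information from agent $j$ (i.e. $j\in N_i$, the neighbor set of $i$). Suppose $\mathcal{G}(\mathcal{A})$ is strongly connected. Let each agent have state $x_i(t)\in\mathbb{R}^m$ evolving according to $$\dot x_i(t)=\sum_{j\in N_i} a_{ij}\big(x_j(t)-x_i(t)\big)+\phi_i(t),\qquad \phi_i(t)=-\tau\Big(\big[x_i(t)-P_{X_i}(x_i(t))\big]+\nabla g_i^+(x_i(t))\Big),\quad i\in\mathcal{V},$$ with $\tau>0$. Then the agents reach consensus asymptotically, i.e. $\lim_{t\to\infty}\|x_i(t)-x_j(t)\|=0$ for all $i,j$, and there is a point $x^*\in\mathbf{X}^*$ such that $\lim_{t\to\infty}x_i(t)=x^*$ for every $i\in\mathcal{V}$.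
   Context: For each $i\in\mathcal{V}$, $g_i:\mathbb{R}^m\to\mathbb{R}$ is a convex function, continuous on $\mathbb{R}^m$, and $X_i\subset\mathbb{R}^m$ is a closed convex set; $X=\bigcap_{i=1}^n X_i$. The convex feasibility problem (CFP) is: find $x\in\mathbb{R}^m$ with $g_i(x)\le 0$ for all $i=1,\dots,n$ and $x\in X$. Its solution set $\mathbf{X}^*$ is assumed non-empty. $g_i^+(x)=\max[g_i(x),0]$. $P_{X_i}(x)$ denotes the Euclidean projection of $x$ onto $X_i$. $\nabla g_i^+(x)$ denotes a subgradient of the convex function $g_i^+$ at $x$ (a vector $v$ with $\langle v,y-x\rangle\le g_i^+(y)-g_i^+(x)$ for all $y$), chosen as $\nabla g_i^+(x)=0$ if $g_i(x)\le 0$ and $\nabla g_i^+(x)=\nabla g_i(x)$ (a subgradient of $g_i$ at $x$) otherwise; each map $x\mapsto\nabla g_i^+(x)$ is assumed piecewise continuous. A directed graph is strongly connected if there is a directed path between any two nodes. *)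

theory Defs
  imports "HOL-Analysis.Analysis"
begin

definition is_subgradient :: "('a::real_inner \<Rightarrow> real) \<Rightarrow> 'a \<Rightarrow> 'a \<Rightarrow> bool" where
  "is_subgradient f x v \<longleftrightarrow> (\<forall>y. inner v (y - x) \<le> f y - f x)"

definition pos_part_fun :: "('a \<Rightarrow> real) \<Rightarrow> 'a \<Rightarrow> real" where
  "pos_part_fun g x = max (g x) 0"

definition piecewise_continuous :: "('a::topological_space \<Rightarrow> 'b::topological_space) \<Rightarrow> bool" where
  "piecewise_continuous f \<longleftrightarrow>
     (\<exists>\<F>. finite \<F> \<and> \<Union>\<F> = UNIV \<and> (\<forall>S\<in>\<F>. continuous_on S f))"

definition neighbors :: "('n \<Rightarrow> 'n \<Rightarrow> real) \<Rightarrow> 'n \<Rightarrow> 'n set" where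
  "neighbors A i = {j. A i j > 0}"

definition strongly_connected :: "('n \<Rightarrow> 'n \<Rightarrow> real) \<Rightarrow> bool" where
  "strongly_connected A \<longleftrightarrow> (\<forall>i j. (i, j) \<in> {(i, j). A i j > 0}\<^sup>*)"

definition cfp_solutions :: "('n \<Rightarrow> 'a \<Rightarrow> real) \<Rightarrow> ('n \<Rightarrow> 'a set) \<Rightarrow> 'a set" where
  "cfp_solutions g X = {z. (\<forall>i. g i z \<le> 0) \<and> z \<in> (\<Inter>i. X i)}"

end

theory Submission
  imports Defs
begin

text \<open>
  Strong connectivity yields positive weights \<open>w\<close> with \<open>w\<^sup>T L = 0\<close> for the graph Laplacian
  \<open>L\<close> (here from Brouwer's fixed point theorem). For every solution \<open>z\<close> of the feasibility
  problem, \<open>V\<^sub>z = \<Sum>\<^sub>i w\<^sub>i \<parallel>x\<^sub>i - z\<parallel>\<^sup>2\<close> is then a Lyapunov function: the consensus term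
  contributes minus a weighted disagreement, and the obtuse angle property of projections
  together with the subgradient inequality for \<open>g\<^sub>i\<^sup>+\<close> make the correction term contribute
  minus the infeasibility \<open>\<parallel>x\<^sub>i - P\<^sub>X\<^sub>i x\<^sub>i\<parallel>\<^sup>2 + g\<^sub>i\<^sup>+(x\<^sub>i)\<close>. So the trajectories stay bounded
  and, since \<open>V\<^sub>z \<ge> 0\<close>, the dissipation becomes arbitrarily small at arbitrarily late times.
  A limit point along such times is a consensus value \<open>x\<^sup>*\<close> that solves the problem, and
  monotonicity of \<open>V\<^sub>x\<^sub>*\<close> upgrades convergence along the subsequence to convergence.
\<close>

section \<open>Positive left null vectors of the Laplacian\<close>

lemma strongly_connected_propagate:
  assumes "strongly_connected A"
    and edge: "\<And>i j. A i j > 0 \<Longrightarrow> Q j \<Longrightarrow> Q i"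
    and "Q j"
  shows "Q i"
proof -
  have "(i, j) \<in> {(i, j). A i j > 0}\<^sup>*"
    using \<open>strongly_connected A\<close> unfolding strongly_connected_def by blast
  then show ?thesis
  proof (induction rule: converse_rtrancl_induct)
    case base
    show ?case using \<open>Q j\<close> .
  next
    case (step a b)
    then show ?case using edge by auto
  qed
qed

lemma sum_neighbors_eq_sum:
  fixes A :: "'n::finite \<Rightarrow> 'n \<Rightarrow> real" and f :: "'n \<Rightarrow> 'a::real_vector"
  assumes "\<And>j. A i j \<ge> 0"
  shows "(\<Sum>j\<in>neighbors A i. A i j *\<^sub>R f j) = (\<Sum>j\<in>UNIV. A i j *\<^sub>R f j)"
proof (rule sum.mono_neutral_left)
  have "A i j = 0" if "j \<notin> neighbors A i" for j
    using that assms[of j] unfolding neighbors_def by simp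
  then show "\<forall>j\<in>UNIV - neighbors A i. A i j *\<^sub>R f j = 0"
    by simp
qed auto

text \<open>\<open>balancing w A\<close> says \<open>w\<^sup>T L = 0\<close> for the Laplacian \<open>L = diag (A 1) - A\<close>.\<close>

definition balancing :: "('n::finite \<Rightarrow> real) \<Rightarrow> ('n \<Rightarrow> 'n \<Rightarrow> real) \<Rightarrow> bool" where
  "balancing w A \<longleftrightarrow> (\<forall>j. (\<Sum>i\<in>UNIV. w i * A i j) = w j * (\<Sum>k\<in>UNIV. A j k))"

definition prob_simplex :: "(real^'n::finite) set" where
  "prob_simplex = {w. (\<forall>i. 0 \<le> w$i) \<and> (\<Sum>i\<in>UNIV. w$i) = 1}"

lemma compact_prob_simplex: "compact (prob_simplex :: (real^'n::finite) set)"
proof (rule compact_eq_bounded_closed[THEN iffD2], rule conjI)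
  have "norm w \<le> 1" if "w \<in> prob_simplex" for w :: "real^'n"
    using that norm_le_l1_cart[of w] unfolding prob_simplex_def by simp
  then show "bounded (prob_simplex :: (real^'n) set)"
    unfolding bounded_iff by blast
  have "closed ((\<Inter>i. {w :: real^'n. 0 \<le> w$i}) \<inter> {w. (\<Sum>i\<in>UNIV. w$i) = 1})"
    by (intro closed_Int closed_INT ballI closed_Collect_le closed_Collect_eq continuous_intros)
  moreover have "prob_simplex = (\<Inter>i. {w :: real^'n. 0 \<le> w$i}) \<inter> {w. (\<Sum>i\<in>UNIV. w$i) = 1}"
    unfolding prob_simplex_def by auto
  ultimately show "closed (prob_simplex :: (real^'n) set)"
    by (simp only:)
qed

lemma convex_prob_simplex: "convex (prob_simplex :: (real^'n::finite) set)"
  unfolding prob_simplex_def convex_def by (auto simp: sum.distrib sum_distrib_left[symmetric])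

lemma prob_simplex_nonempty: "(prob_simplex :: (real^'n::finite) set) \<noteq> {}"
proof -
  have "(\<chi> i. 1 / real CARD('n)) \<in> (prob_simplex :: (real^'n) set)"
    unfolding prob_simplex_def by simp
  then show ?thesis by blast
qed

text \<open>
  The lazy random walk \<open>w \<mapsto> w + \<delta> (w\<^sup>T A - w \<circ> A 1)\<close>: its fixed points are the balancing
  vectors, and it maps the simplex into itself as long as the diagonal weights
  \<open>1 - \<delta> (A 1)\<^sub>j\<close> stay nonnegative.
\<close>

definition lazy_walk :: "real \<Rightarrow> ('n::finite \<Rightarrow> 'n \<Rightarrow> real) \<Rightarrow> real^'n \<Rightarrow> real^'n" where
  "lazy_walk \<delta> A w = (\<chi> j. \<delta> * (\<Sum>i\<in>UNIV. w$i * A i j) + (1 - \<delta> * (\<Sum>k\<in>UNIV. A j k)) * w$j)"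

lemma lazy_walk_in_prob_simplex:
  assumes A_nonneg: "\<And>i j. A i j \<ge> 0" and "\<delta> \<ge> 0" and \<delta>_small: "\<And>j. \<delta> * (\<Sum>k\<in>UNIV. A j k) \<le> 1"
    and w: "w \<in> prob_simplex"
  shows "lazy_walk \<delta> A w \<in> prob_simplex"
proof -
  have "0 \<le> lazy_walk \<delta> A w $ j" for j
  proof -
    have "0 \<le> \<delta> * (\<Sum>i\<in>UNIV. w$i * A i j)"
      using w \<open>\<delta> \<ge> 0\<close> A_nonneg unfolding prob_simplex_def
      by (intro mult_nonneg_nonneg sum_nonneg) auto
    moreover have "0 \<le> (1 - \<delta> * (\<Sum>k\<in>UNIV. A j k)) * w$j"
      using w \<delta>_small[of j] unfolding prob_simplex_def by auto
    ultimately show ?thesis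
      unfolding lazy_walk_def by simp
  qed
  moreover have "(\<Sum>j\<in>UNIV. lazy_walk \<delta> A w $ j) = 1"
  proof -
    have "(\<Sum>j\<in>UNIV. lazy_walk \<delta> A w $ j) = \<delta> * (\<Sum>j\<in>UNIV. \<Sum>i\<in>UNIV. w$i * A i j)
         + (\<Sum>j\<in>UNIV. w$j) - \<delta> * (\<Sum>j\<in>UNIV. (\<Sum>k\<in>UNIV. A j k) * w$j)"
      unfolding lazy_walk_def by (simp add: sum.distrib sum_distrib_left algebra_simps sum_subtractf)
    also have "(\<Sum>j\<in>UNIV. \<Sum>i\<in>UNIV. w$i * A i j) = (\<Sum>j\<in>UNIV. (\<Sum>k\<in>UNIV. A j k) * w$j)"
      by (subst sum.swap) (simp add: sum_distrib_left sum_distrib_right mult.commute)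
    finally show ?thesis
      using w unfolding prob_simplex_def by simp
  qed
  ultimately show ?thesis
    unfolding prob_simplex_def by blast
qed

lemma balancing_of_lazy_walk_fixed:
  assumes "\<delta> > 0" and "lazy_walk \<delta> A w = w"
  shows "balancing (\<lambda>i. w$i) A"
  unfolding balancing_def
proof
  fix j
  have "lazy_walk \<delta> A w $ j = w $ j"
    using \<open>lazy_walk \<delta> A w = w\<close> by simp
  then have "\<delta> * (\<Sum>i\<in>UNIV. w$i * A i j) = \<delta> * (w$j * (\<Sum>k\<in>UNIV. A j k))"
    unfolding lazy_walk_def by (simp add: algebra_simps)
  then show "(\<Sum>i\<in>UNIV. w$i * A i j) = w$j * (\<Sum>k\<in>UNIV. A j k)"
    using \<open>\<delta> > 0\<close> by simp
qed

lemma balancing_nonneg_exists: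
  fixes A :: "'n::finite \<Rightarrow> 'n \<Rightarrow> real"
  assumes A_nonneg: "\<And>i j. A i j \<ge> 0"
  shows "\<exists>w. (\<forall>i. w i \<ge> 0) \<and> (\<Sum>i\<in>UNIV. w i) = 1 \<and> balancing w A"
proof -
  define D where "D = (\<Sum>j\<in>UNIV. \<Sum>k\<in>UNIV. A j k)"
  define \<delta> where "\<delta> = 1 / (1 + D)"
  have row_le: "(\<Sum>k\<in>UNIV. A j k) \<le> D" for j
    unfolding D_def by (rule member_le_sum) (auto simp: A_nonneg sum_nonneg)
  have "D \<ge> 0"
    unfolding D_def by (simp add: A_nonneg sum_nonneg)
  then have "\<delta> > 0"
    unfolding \<delta>_def by simp
  have \<delta>_small: "\<delta> * (\<Sum>k\<in>UNIV. A j k) \<le> 1" for j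
    unfolding \<delta>_def using row_le[of j] \<open>D \<ge> 0\<close> by (simp add: field_simps)
  have "lazy_walk \<delta> A \<in> prob_simplex \<rightarrow> prob_simplex"
    using lazy_walk_in_prob_simplex[where A=A, OF A_nonneg less_imp_le[OF \<open>\<delta> > 0\<close>] \<delta>_small]
    by blast
  moreover have "continuous_on prob_simplex (lazy_walk \<delta> A)"
    unfolding lazy_walk_def by (intro continuous_intros)
  ultimately obtain w where "w \<in> prob_simplex" and "lazy_walk \<delta> A w = w"
    using brouwer[OF compact_prob_simplex convex_prob_simplex prob_simplex_nonempty] by blast
  then show ?thesis
    using balancing_of_lazy_walk_fixed[OF \<open>\<delta> > 0\<close>] unfolding prob_simplex_def by auto
qed

lemma balancing_zero_propagates:
  fixes A :: "'n::finite \<Rightarrow> 'n \<Rightarrow> real"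
  assumes A_nonneg: "\<And>i j. A i j \<ge> 0" and "strongly_connected A"
    and bal: "balancing w A" and w_nonneg: "\<And>i. w i \<ge> 0" and "w k = 0"
  shows "w i = 0"
  using \<open>strongly_connected A\<close>
proof (rule strongly_connected_propagate[where Q="\<lambda>i. w i = 0"])
  fix a b assume ab: "A a b > 0" "w b = 0"
  have "(\<Sum>i\<in>UNIV. w i * A i b) = 0"
    using bal ab(2) unfolding balancing_def by simp
  moreover have "\<forall>i\<in>UNIV. 0 \<le> w i * A i b"
    using w_nonneg A_nonneg by simp
  ultimately have "w a * A a b = 0"
    using sum_nonneg_eq_0_iff[of UNIV "\<lambda>i. w i * A i b"] by simp
  then show "w a = 0" using ab(1) by simp
qed (rule \<open>w k = 0\<close>)

lemma balancing_positive_exists: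
  fixes A :: "'n::finite \<Rightarrow> 'n \<Rightarrow> real"
  assumes A_nonneg: "\<And>i j. A i j \<ge> 0" and strong: "strongly_connected A"
  shows "\<exists>w. (\<forall>i. w i > 0) \<and> balancing w A"
proof -
  obtain w where w_nonneg: "\<And>i. w i \<ge> 0" and w_sum: "(\<Sum>i\<in>UNIV. w i) = 1"
    and bal: "balancing w A"
    using balancing_nonneg_exists[where A=A, OF A_nonneg] by blast
  show ?thesis
  proof (intro exI conjI allI)
    show "balancing w A" by (rule bal)
  next
    fix i
    show "w i > 0"
    proof (rule ccontr)
      assume "\<not> w i > 0"
      then have "w i = 0" using w_nonneg[of i] by simp
      then have "w k = 0" for k
        using balancing_zero_propagates[where A=A, OF A_nonneg strong bal w_nonneg] by blast
      then show False using w_sum by simp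
    qed
  qed
qed


section \<open>Dissipation along the projected consensus flow\<close>

definition disagreement ::
    "('n::finite \<Rightarrow> real) \<Rightarrow> ('n \<Rightarrow> 'n \<Rightarrow> real) \<Rightarrow> ('n \<Rightarrow> 'a::real_normed_vector) \<Rightarrow> real" where
  "disagreement w A y = (\<Sum>i\<in>UNIV. \<Sum>j\<in>UNIV. w i * A i j * (norm (y j - y i))\<^sup>2)"

lemma disagreement_nonneg:
  assumes "\<And>i. w i \<ge> 0" and "\<And>i j. A i j \<ge> 0"
  shows "disagreement w A y \<ge> 0"
  unfolding disagreement_def using assms by (intro sum_nonneg mult_nonneg_nonneg) auto

lemma disagreement_eq_0_imp_consensus:
  fixes A :: "'n::finite \<Rightarrow> 'n \<Rightarrow> real"
  assumes w_pos: "\<And>i. w i > 0" and A_nonneg: "\<And>i j. A i j \<ge> 0"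
    and strong: "strongly_connected A" and "disagreement w A y = 0"
  shows "y i = y k"
  using strong
proof (rule strongly_connected_propagate[where Q="\<lambda>j. y j = y k"])
  fix a b assume ab: "A a b > 0" "y b = y k"
  have term_nonneg: "0 \<le> w i * A i j * (norm (y j - y i))\<^sup>2" for i j
    using w_pos[of i] A_nonneg[of i j] by simp
  have "(\<Sum>j\<in>UNIV. w a * A a j * (norm (y j - y a))\<^sup>2) = 0"
    using \<open>disagreement w A y = 0\<close> term_nonneg unfolding disagreement_def
    by (subst (asm) sum_nonneg_eq_0_iff) (auto intro: sum_nonneg)
  then have "w a * A a b * (norm (y b - y a))\<^sup>2 = 0"
    using term_nonneg by (subst (asm) sum_nonneg_eq_0_iff) auto
  then show "y a = y k"
    using ab w_pos[of a] by simp
qed simp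

text \<open>The Laplacian annihilates constants, hence the free base point \<open>z\<close>.\<close>

lemma balancing_laplacian_form:
  fixes y :: "'n::finite \<Rightarrow> 'a::real_inner"
  assumes bal: "balancing w A"
  shows "2 * (\<Sum>i\<in>UNIV. w i * (\<Sum>j\<in>UNIV. A i j * inner (y j - y i) (y i - z)))
       = - disagreement w A y"
proof -
  define u where "u i = y i - z" for i
  have y_diff: "y j - y i = u j - u i" for i j
    unfolding u_def by simp
  have polar: "2 * inner (u j - u i) (u i)
      = inner (u j) (u j) - inner (u i) (u i) - (norm (u j - u i))\<^sup>2" for i j
    by (simp add: power2_norm_eq_inner inner_diff_left inner_diff_right inner_commute)
  have inflow_eq_outflow: "(\<Sum>i\<in>UNIV. \<Sum>j\<in>UNIV. w i * A i j * inner (u j) (u j))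
      = (\<Sum>i\<in>UNIV. \<Sum>j\<in>UNIV. w i * A i j * inner (u i) (u i))"
  proof -
    have "(\<Sum>i\<in>UNIV. \<Sum>j\<in>UNIV. w i * A i j * inner (u j) (u j))
        = (\<Sum>j\<in>UNIV. (\<Sum>i\<in>UNIV. w i * A i j) * inner (u j) (u j))"
      by (subst sum.swap) (simp add: sum_distrib_right)
    also have "\<dots> = (\<Sum>j\<in>UNIV. w j * (\<Sum>k\<in>UNIV. A j k) * inner (u j) (u j))"
      using bal unfolding balancing_def by simp
    also have "\<dots> = (\<Sum>i\<in>UNIV. \<Sum>j\<in>UNIV. w i * A i j * inner (u i) (u i))"
      by (simp add: sum_distrib_left sum_distrib_right algebra_simps)
    finally show ?thesis .
  qed
  have "2 * (\<Sum>i\<in>UNIV. w i * (\<Sum>j\<in>UNIV. A i j * inner (y j - y i) (y i - z)))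
      = (\<Sum>i\<in>UNIV. \<Sum>j\<in>UNIV. w i * A i j * (2 * inner (u j - u i) (u i)))"
    unfolding y_diff u_def[symmetric] by (simp add: sum_distrib_left algebra_simps)
  also have "\<dots> = (\<Sum>i\<in>UNIV. \<Sum>j\<in>UNIV. w i * A i j * inner (u j) (u j))
       - (\<Sum>i\<in>UNIV. \<Sum>j\<in>UNIV. w i * A i j * inner (u i) (u i))
       - disagreement w A u"
    unfolding polar disagreement_def by (simp add: right_diff_distrib sum_subtractf)
  also have "disagreement w A u = disagreement w A y"
    unfolding disagreement_def y_diff ..
  finally show ?thesis
    unfolding inflow_eq_outflow by simp
qed

definition infeasibility :: "'a::euclidean_space set \<Rightarrow> ('a \<Rightarrow> real) \<Rightarrow> 'a \<Rightarrow> real" where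
  "infeasibility X h u = (norm (u - closest_point X u))\<^sup>2 + pos_part_fun h u"

lemma infeasibility_nonneg: "infeasibility X h u \<ge> 0"
  unfolding infeasibility_def pos_part_fun_def by simp

lemma infeasibility_eq_0_iff:
  assumes "closed X" and "X \<noteq> {}"
  shows "infeasibility X h u = 0 \<longleftrightarrow> u \<in> X \<and> h u \<le> 0"
proof -
  have "pos_part_fun h u \<ge> 0"
    unfolding pos_part_fun_def by simp
  then have "infeasibility X h u = 0 \<longleftrightarrow> u = closest_point X u \<and> pos_part_fun h u = 0"
    unfolding infeasibility_def by (simp add: add_nonneg_eq_0_iff)
  also have "\<dots> \<longleftrightarrow> u \<in> X \<and> h u \<le> 0"
    using closest_point_in_set[OF assms] closest_point_self[of u X]
    unfolding pos_part_fun_def by (metis max.absorb_iff2)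
  finally show ?thesis .
qed

lemma isCont_infeasibility:
  assumes "convex X" "closed X" "X \<noteq> {}" and "isCont h u"
  shows "isCont (infeasibility X h) u"
  unfolding infeasibility_def pos_part_fun_def
  using continuous_at_closest_point[OF assms(1-3)] assms(4) by (intro continuous_intros)

text \<open>
  The projection term uses the obtuse angle at \<open>closest_point X u\<close> towards \<open>z \<in> X\<close>;
  the subgradient term uses \<open>h\<^sup>+ z = 0\<close>.
\<close>

lemma infeasibility_le_inner:
  fixes u z :: "'a::euclidean_space"
  assumes "convex X" "closed X" "z \<in> X"
    and subgrad: "is_subgradient (pos_part_fun h) u v" and "h z \<le> 0"
  shows "infeasibility X h u \<le> inner ((u - closest_point X u) + v) (u - z)"
proof -
  define p where "p = closest_point X u"
  have "p \<in> X" and p_min: "\<forall>y\<in>X. dist u p \<le> dist u y"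
    using closest_point_exists[OF \<open>closed X\<close>, of u] \<open>z \<in> X\<close> unfolding p_def by auto
  have obtuse: "inner (u - p) (z - p) \<le> 0"
    by (rule any_closest_point_dot[OF \<open>convex X\<close> \<open>closed X\<close> \<open>p \<in> X\<close> \<open>z \<in> X\<close> p_min])
  have proj: "inner (u - p) (u - z) = (norm (u - p))\<^sup>2 - inner (u - p) (z - p)"
    by (simp add: power2_norm_eq_inner inner_diff_right)
  have "inner v (z - u) \<le> pos_part_fun h z - pos_part_fun h u"
    using subgrad unfolding is_subgradient_def by blast
  moreover have "pos_part_fun h z = 0"
    using \<open>h z \<le> 0\<close> unfolding pos_part_fun_def by simp
  ultimately have "pos_part_fun h u \<le> inner v (u - z)"
    by (simp add: inner_diff_right)
  with obtuse proj show ?thesis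
    unfolding infeasibility_def p_def[symmetric] by (simp add: inner_add_left)
qed

definition dissipation_rate ::
    "('n::finite \<Rightarrow> real) \<Rightarrow> ('n \<Rightarrow> 'n \<Rightarrow> real) \<Rightarrow> real \<Rightarrow> ('n \<Rightarrow> 'a::euclidean_space set)
      \<Rightarrow> ('n \<Rightarrow> 'a \<Rightarrow> real) \<Rightarrow> ('n \<Rightarrow> 'a) \<Rightarrow> real" where
  "dissipation_rate w A \<tau> X h y =
     disagreement w A y + 2 * \<tau> * (\<Sum>i\<in>UNIV. w i * infeasibility (X i) (h i) (y i))"

lemma dissipation_rate_nonneg:
  assumes "\<And>i. w i \<ge> 0" "\<And>i j. A i j \<ge> 0" "\<tau> \<ge> 0"
  shows "dissipation_rate w A \<tau> X h y \<ge> 0"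
  unfolding dissipation_rate_def using assms disagreement_nonneg[of w A y]
  by (intro add_nonneg_nonneg mult_nonneg_nonneg sum_nonneg) (auto simp: infeasibility_nonneg)

lemma dissipation_rate_tendsto:
  assumes "\<And>i. convex (X i)" "\<And>i. closed (X i)" "\<And>i. X i \<noteq> {}"
    and "\<And>i. continuous_on UNIV (h i)"
    and lim: "\<And>i. (\<lambda>k. y k i) \<longlonglongrightarrow> l i"
  shows "(\<lambda>k. dissipation_rate w A \<tau> X h (y k)) \<longlonglongrightarrow> dissipation_rate w A \<tau> X h l"
proof -
  have "isCont (infeasibility (X i) (h i)) u" for i u
    using assms(1-4) by (intro isCont_infeasibility) (auto simp: continuous_on_eq_continuous_at)
  then show ?thesis
    unfolding dissipation_rate_def disagreement_def
    by (intro tendsto_intros lim isCont_tendsto_compose[where g="infeasibility (X _) (h _)"])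
qed

lemma dissipation_rate_eq_0_imp_consensus_solution:
  fixes A :: "'n::finite \<Rightarrow> 'n \<Rightarrow> real" and y :: "'n \<Rightarrow> 'a::euclidean_space"
  assumes w_pos: "\<And>i. w i > 0" and A_nonneg: "\<And>i j. A i j \<ge> 0"
    and strong: "strongly_connected A" and "\<tau> > 0"
    and X_closed: "\<And>i. closed (X i)" and X_ne: "\<And>i. X i \<noteq> {}"
    and "dissipation_rate w A \<tau> X h y = 0"
  shows "y i = y k" and "y k \<in> cfp_solutions h X"
proof -
  have w_nonneg: "\<And>i. w i \<ge> 0"
    using w_pos less_imp_le by blast
  have terms_nonneg: "0 \<le> w i * infeasibility (X i) (h i) (y i)" for i
    by (intro mult_nonneg_nonneg w_nonneg infeasibility_nonneg)
  have sum_nonneg': "0 \<le> 2 * \<tau> * (\<Sum>i\<in>UNIV. w i * infeasibility (X i) (h i) (y i))"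
    using \<open>\<tau> > 0\<close> terms_nonneg by (simp add: sum_nonneg)
  have "disagreement w A y = 0 \<and> (\<Sum>i\<in>UNIV. w i * infeasibility (X i) (h i) (y i)) = 0"
    using \<open>dissipation_rate w A \<tau> X h y = 0\<close> \<open>\<tau> > 0\<close> sum_nonneg'
      disagreement_nonneg[where w=w and A=A and y=y, OF w_nonneg A_nonneg]
    unfolding dissipation_rate_def by (simp add: add_nonneg_eq_0_iff)
  then have consensus: "y i = y j" for i j
    using disagreement_eq_0_imp_consensus[where w=w and A=A and y=y, OF w_pos A_nonneg strong]
    by blast
  from \<open>disagreement w A y = 0 \<and> _\<close> have weighted_zero: "w i * infeasibility (X i) (h i) (y i) = 0" for i
    using terms_nonneg by (simp add: sum_nonneg_eq_0_iff)
  have "infeasibility (X i) (h i) (y k) = 0" for i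
    using weighted_zero[of i] w_pos[of i] consensus[of i k] by simp
  then show "y k \<in> cfp_solutions h X"
    unfolding cfp_solutions_def using infeasibility_eq_0_iff[OF X_closed X_ne] by blast
  show "y i = y k" by (rule consensus)
qed

definition projected_consensus_field ::
    "('n::finite \<Rightarrow> 'n \<Rightarrow> real) \<Rightarrow> real \<Rightarrow> ('n \<Rightarrow> 'a::euclidean_space set) \<Rightarrow> ('n \<Rightarrow> 'a \<Rightarrow> 'a)
      \<Rightarrow> ('n \<Rightarrow> 'a) \<Rightarrow> 'n \<Rightarrow> 'a" where
  "projected_consensus_field A \<tau> X v y i =
     (\<Sum>j\<in>UNIV. A i j *\<^sub>R (y j - y i)) - \<tau> *\<^sub>R ((y i - closest_point (X i) (y i)) + v i (y i))"

lemma projected_consensus_dissipation: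
  fixes A :: "'n::finite \<Rightarrow> 'n \<Rightarrow> real" and y :: "'n \<Rightarrow> 'a::euclidean_space"
  assumes bal: "balancing w A" and w_nonneg: "\<And>i. w i \<ge> 0" and "\<tau> \<ge> 0"
    and "\<And>i. convex (X i)" "\<And>i. closed (X i)"
    and "\<And>i. z \<in> X i" "\<And>i. h i z \<le> 0"
    and "\<And>i. is_subgradient (pos_part_fun (h i)) (y i) (v i (y i))"
  shows "(\<Sum>i\<in>UNIV. w i * (2 * inner (projected_consensus_field A \<tau> X v y i) (y i - z)))
     \<le> - dissipation_rate w A \<tau> X h y"
proof -
  define c where "c i = inner ((y i - closest_point (X i) (y i)) + v i (y i)) (y i - z)" for i
  have per_agent: "inner (projected_consensus_field A \<tau> X v y i) (y i - z)
      = (\<Sum>j\<in>UNIV. A i j * inner (y j - y i) (y i - z)) - \<tau> * c i" for i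
    unfolding projected_consensus_field_def c_def by (simp add: inner_diff_left inner_sum_left)
  have "(\<Sum>i\<in>UNIV. w i * (2 * inner (projected_consensus_field A \<tau> X v y i) (y i - z)))
      = 2 * (\<Sum>i\<in>UNIV. w i * (\<Sum>j\<in>UNIV. A i j * inner (y j - y i) (y i - z)))
        - 2 * \<tau> * (\<Sum>i\<in>UNIV. w i * c i)"
    unfolding per_agent right_diff_distrib sum_subtractf sum_distrib_left by (simp add: ac_simps)
  also have "\<dots> = - disagreement w A y - 2 * \<tau> * (\<Sum>i\<in>UNIV. w i * c i)"
    unfolding balancing_laplacian_form[OF bal] ..
  also have "\<dots> \<le> - dissipation_rate w A \<tau> X h y"
  proof -
    have "(\<Sum>i\<in>UNIV. w i * infeasibility (X i) (h i) (y i)) \<le> (\<Sum>i\<in>UNIV. w i * c i)"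
      unfolding c_def using assms by (intro sum_mono mult_left_mono infeasibility_le_inner) auto
    then show ?thesis
      unfolding dissipation_rate_def using \<open>\<tau> \<ge> 0\<close> by (simp add: mult_left_mono)
  qed
  finally show ?thesis .
qed

section \<open>Convergence from the weighted squared distance\<close>

definition weighted_sq_dist ::
    "('n::finite \<Rightarrow> real) \<Rightarrow> ('n \<Rightarrow> 'a::real_normed_vector) \<Rightarrow> 'a \<Rightarrow> real" where
  "weighted_sq_dist w y z = (\<Sum>i\<in>UNIV. w i * (norm (y i - z))\<^sup>2)"

lemma weighted_sq_dist_nonneg:
  assumes "\<And>i. w i \<ge> 0"
  shows "weighted_sq_dist w y z \<ge> 0"
  unfolding weighted_sq_dist_def using assms by (intro sum_nonneg) simp

lemma weighted_sq_dist_ge_term: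
  assumes "\<And>i. w i \<ge> 0"
  shows "w i * (norm (y i - z))\<^sup>2 \<le> weighted_sq_dist w y z"
  unfolding weighted_sq_dist_def
  by (rule member_le_sum[where f="\<lambda>i. w i * (norm (y i - z))\<^sup>2"]) (simp_all add: assms)

lemma norm_diff_le_weighted_sq_dist:
  assumes "\<And>j. w j > 0"
  shows "norm (y i - z) \<le> sqrt (weighted_sq_dist w y z / w i)"
proof -
  have "w i * (norm (y i - z))\<^sup>2 \<le> weighted_sq_dist w y z"
    using assms by (intro weighted_sq_dist_ge_term less_imp_le)
  then have "(norm (y i - z))\<^sup>2 \<le> weighted_sq_dist w y z / w i"
    using assms[of i] by (simp add: field_simps)
  then show ?thesis by (rule real_le_rsqrt)
qed

lemma norm_le_of_weighted_sq_dist_le: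
  assumes "\<And>j. w j > 0" and "weighted_sq_dist w y z \<le> c"
  shows "norm (y i) \<le> norm z + sqrt (c / w i)"
proof -
  have "norm (y i - z) \<le> sqrt (weighted_sq_dist w y z / w i)"
    using assms(1) by (rule norm_diff_le_weighted_sq_dist)
  also have "\<dots> \<le> sqrt (c / w i)"
    using assms by (simp add: divide_right_mono less_imp_le)
  finally show ?thesis
    using norm_triangle_sub[of "y i" z] by linarith
qed

lemma has_real_derivative_weighted_sq_dist:
  fixes x :: "'n::finite \<Rightarrow> real \<Rightarrow> 'a::real_inner"
  assumes "\<And>i. (x i has_vector_derivative D i) (at t within T)"
  shows "((\<lambda>t. weighted_sq_dist w (\<lambda>i. x i t) z) has_real_derivative
           (\<Sum>i\<in>UNIV. w i * (2 * inner (D i) (x i t - z)))) (at t within T)"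
proof -
  have "((\<lambda>t. inner (x i t - z) (x i t - z)) has_real_derivative 2 * inner (D i) (x i t - z))
          (at t within T)" for i
  proof -
    have diff: "((\<lambda>t. x i t - z) has_derivative (\<lambda>s. s *\<^sub>R D i)) (at t within T)"
      using assms[of i] unfolding has_vector_derivative_def
      by (auto intro!: derivative_eq_intros)
    show ?thesis
      unfolding has_field_derivative_def
      by (rule has_derivative_eq_rhs[OF has_derivative_inner[OF diff diff]])
         (auto simp: inner_commute algebra_simps)
  qed
  then show ?thesis
    unfolding weighted_sq_dist_def power2_norm_eq_inner
    by (intro DERIV_sum DERIV_cmult)
qed

lemma increment_le_of_deriv_le:
  fixes V :: "real \<Rightarrow> real"
  assumes "\<And>t. a \<le> t \<Longrightarrow> t \<le> b \<Longrightarrow> (V has_real_derivative D t) (at t within {a..})"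
    and "\<And>t. a \<le> t \<Longrightarrow> t \<le> b \<Longrightarrow> D t \<le> c" and "a \<le> b"
  shows "V b \<le> V a + c * (b - a)"
proof -
  have "\<exists>t\<in>{a..b}. V b - V a = D t * (b - a)"
  proof (rule mvt_very_simple[OF \<open>a \<le> b\<close>])
    fix t assume "a \<le> t" "t \<le> b"
    then have "(V has_real_derivative D t) (at t within {a..b})"
      using DERIV_subset[OF assms(1)] by auto
    then show "(V has_derivative (*) (D t)) (at t within {a..b})"
      by (simp add: has_field_derivative_def)
  qed
  then obtain t where "t \<in> {a..b}" "V b - V a = D t * (b - a)" by auto
  moreover have "D t * (b - a) \<le> c * (b - a)"
    using assms(2)[of t] \<open>t \<in> {a..b}\<close> \<open>a \<le> b\<close> by (intro mult_right_mono) auto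
  ultimately show ?thesis by (simp add: algebra_simps)
qed

lemma antimono_of_deriv_nonpos:
  fixes V :: "real \<Rightarrow> real"
  assumes deriv: "\<And>t. t \<ge> 0 \<Longrightarrow> (V has_real_derivative D t) (at t within {0..})"
    and nonpos: "\<And>t. t \<ge> 0 \<Longrightarrow> D t \<le> 0" and "0 \<le> a" "a \<le> b"
  shows "V b \<le> V a"
proof -
  have "V b \<le> V a + 0 * (b - a)"
  proof (rule increment_le_of_deriv_le[OF _ _ \<open>a \<le> b\<close>])
    fix t assume "a \<le> t" "t \<le> b"
    then show "(V has_real_derivative D t) (at t within {a..})"
      using DERIV_subset[OF deriv[of t]] \<open>0 \<le> a\<close> by auto
    show "D t \<le> 0"
      using nonpos \<open>0 \<le> a\<close> \<open>a \<le> t\<close> by simp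
  qed
  then show ?thesis by simp
qed

text \<open>If \<open>h \<ge> e > 0\<close> on a half line, \<open>V\<close> would decrease at rate \<open>e\<close> there and become negative.\<close>

lemma exists_late_small_dissipation:
  fixes V h :: "real \<Rightarrow> real"
  assumes deriv: "\<And>t. t \<ge> 0 \<Longrightarrow> (V has_real_derivative D t) (at t within {0..})"
    and dissip: "\<And>t. t \<ge> 0 \<Longrightarrow> D t \<le> - h t"
    and V_nonneg: "\<And>t. t \<ge> 0 \<Longrightarrow> V t \<ge> 0" and "e > 0" "T \<ge> 0"
  shows "\<exists>t\<ge>T. h t < e"
proof (rule ccontr)
  assume "\<not> (\<exists>t\<ge>T. h t < e)"
  then have h_ge: "h t \<ge> e" if "t \<ge> T" for t
    using that by (simp add: not_less)
  define b where "b = T + V T / e + 1"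
  have "T \<le> b"
    unfolding b_def using V_nonneg[of T] \<open>e > 0\<close> \<open>T \<ge> 0\<close> by simp
  have "V b \<le> V T + (- e) * (b - T)"
  proof (rule increment_le_of_deriv_le[OF _ _ \<open>T \<le> b\<close>])
    fix t assume "T \<le> t" "t \<le> b"
    then show "(V has_real_derivative D t) (at t within {T..})"
      using DERIV_subset[OF deriv[of t]] \<open>T \<ge> 0\<close> by auto
    show "D t \<le> - e"
      using dissip[of t] h_ge[of t] \<open>T \<le> t\<close> \<open>T \<ge> 0\<close> by simp
  qed
  also have "V T + (- e) * (b - T) = - e"
    unfolding b_def using \<open>e > 0\<close> by (simp add: field_simps)
  finally show False
    using V_nonneg[of b] \<open>T \<le> b\<close> \<open>T \<ge> 0\<close> \<open>e > 0\<close> by simp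
qed

lemma dissipation_small_along_sequence:
  fixes V h :: "real \<Rightarrow> real"
  assumes deriv: "\<And>t. t \<ge> 0 \<Longrightarrow> (V has_real_derivative D t) (at t within {0..})"
    and dissip: "\<And>t. t \<ge> 0 \<Longrightarrow> D t \<le> - h t"
    and V_nonneg: "\<And>t. t \<ge> 0 \<Longrightarrow> V t \<ge> 0" and h_nonneg: "\<And>t. h t \<ge> 0"
  obtains s where "\<And>k. s k \<ge> 0" "filterlim s at_top sequentially" "(\<lambda>k. h (s k)) \<longlonglongrightarrow> 0"
proof -
  have "\<exists>t\<ge>T. h t < e" if "e > 0" "T \<ge> 0" for e T
    using exists_late_small_dissipation[OF deriv dissip V_nonneg that] .
  then have "\<forall>k. \<exists>t. t \<ge> real k \<and> h t < inverse (real (Suc k))"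
    by (metis of_nat_0_le_iff inverse_positive_iff_positive of_nat_0_less_iff zero_less_Suc)
  then obtain s where s_ge: "\<And>k. s k \<ge> real k" and h_s: "\<And>k. h (s k) < inverse (real (Suc k))"
    by metis
  show ?thesis
  proof (rule that)
    show "s k \<ge> 0" for k
      by (rule order_trans[OF of_nat_0_le_iff s_ge])
    show "filterlim s at_top sequentially"
      by (rule filterlim_at_top_mono[OF filterlim_real_sequentially]) (simp add: s_ge)
    show "(\<lambda>k. h (s k)) \<longlonglongrightarrow> 0"
    proof (rule real_tendsto_sandwich[where f="\<lambda>k. 0" and h="\<lambda>k. inverse (real (Suc k))"])
      show "(\<lambda>k. inverse (real (Suc k))) \<longlonglongrightarrow> 0"
        by (rule LIMSEQ_inverse_real_of_nat)
      show "\<forall>\<^sub>F k in sequentially. h (s k) \<le> inverse (real (Suc k))"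
        by (intro always_eventually allI less_imp_le h_s)
    qed (auto intro: always_eventually h_nonneg)
  qed
qed

lemma finite_family_convergent_subseq:
  fixes y :: "'n::finite \<Rightarrow> nat \<Rightarrow> 'a::euclidean_space"
  assumes "\<And>i k. norm (y i k) \<le> B i"
  obtains r l where "strict_mono r" "\<And>i. (\<lambda>k. y i (r k)) \<longlonglongrightarrow> l i"
proof -
  define Y where "Y k = (\<chi> i. y i k)" for k
  have "norm (Y k) \<le> (\<Sum>i\<in>UNIV. B i)" for k
  proof -
    have "norm (Y k) \<le> (\<Sum>i\<in>UNIV. norm (Y k $ i))"
      unfolding norm_vec_def by (rule L2_set_le_sum) simp
    also have "\<dots> \<le> (\<Sum>i\<in>UNIV. B i)"
      unfolding Y_def by (rule sum_mono) (simp add: assms)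
    finally show ?thesis .
  qed
  then have "bounded (range Y)"
    unfolding bounded_iff by blast
  then obtain l r where r: "strict_mono r" and lim: "(Y \<circ> r) \<longlonglongrightarrow> l"
    using bounded_imp_convergent_subsequence by blast
  show ?thesis
  proof (rule that[OF r])
    show "(\<lambda>k. y i (r k)) \<longlonglongrightarrow> l $ i" for i
      using tendsto_vec_nth[OF lim, of i] unfolding Y_def by (simp add: o_def)
  qed
qed

lemma tendsto_of_weighted_sq_dist_antimono:
  fixes x :: "'n::finite \<Rightarrow> real \<Rightarrow> 'a::real_normed_vector" and w :: "'n \<Rightarrow> real" and z :: 'a
  defines "V \<equiv> \<lambda>t. weighted_sq_dist w (\<lambda>i. x i t) z"
  assumes w_pos: "\<And>i. w i > 0"
    and antimono: "\<And>a b. 0 \<le> a \<Longrightarrow> a \<le> b \<Longrightarrow> V b \<le> V a"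
    and s: "filterlim s at_top sequentially" and V_s: "(\<lambda>k. V (s k)) \<longlonglongrightarrow> 0"
  shows "(x i \<longlongrightarrow> z) at_top"
proof -
  have V_nonneg: "V t \<ge> 0" for t
    unfolding V_def using w_pos by (intro weighted_sq_dist_nonneg less_imp_le)
  have upper: "\<forall>\<^sub>F t in at_top. V t < e" if "e > 0" for e
  proof -
    have "\<forall>\<^sub>F k in sequentially. s k \<ge> 0"
      using s by (simp add: filterlim_at_top)
    from eventually_conj[OF this order_tendstoD(2)[OF V_s \<open>e > 0\<close>]]
    obtain k where "s k \<ge> 0" "V (s k) < e"
      by (auto simp: eventually_sequentially)
    then have "V t < e" if "t \<ge> s k" for t
      using antimono[of "s k" t] that by simp
    then show ?thesis
      unfolding eventually_at_top_linorder by blast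
  qed
  have lower: "\<forall>\<^sub>F t in at_top. a < V t" if "a < 0" for a
    using V_nonneg that by (intro always_eventually allI) (meson less_le_trans)
  have V_lim: "(V \<longlongrightarrow> 0) at_top"
    by (rule order_tendstoI[OF lower upper])
  have bound: "norm (x i t - z) \<le> sqrt (V t / w i)" for t
    unfolding V_def using w_pos by (rule norm_diff_le_weighted_sq_dist)
  have "((\<lambda>t. norm (x i t - z)) \<longlongrightarrow> 0) at_top"
  proof (rule real_tendsto_sandwich[where f="\<lambda>t. 0" and h="\<lambda>t. sqrt (V t / w i)"])
    show "((\<lambda>t. sqrt (V t / w i)) \<longlongrightarrow> 0) at_top"
      using tendsto_real_sqrt[OF tendsto_divide_zero[OF V_lim]] by simp
  qed (simp_all add: bound)
  then show ?thesis
    unfolding tendsto_norm_zero_iff LIM_zero_iff .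
qed


lemma lyapunov_consensus_convergence:
  fixes x :: "'n::finite \<Rightarrow> real \<Rightarrow> 'a::euclidean_space" and R :: "('n \<Rightarrow> 'a) \<Rightarrow> real"
  assumes w_pos: "\<And>i. w i > 0" and "z0 \<in> S"
    and deriv: "\<And>z t. z \<in> S \<Longrightarrow> t \<ge> 0 \<Longrightarrow>
      ((\<lambda>t. weighted_sq_dist w (\<lambda>i. x i t) z) has_real_derivative D z t) (at t within {0..})"
    and dissip: "\<And>z t. z \<in> S \<Longrightarrow> t \<ge> 0 \<Longrightarrow> D z t \<le> - R (\<lambda>i. x i t)"
    and R_nonneg: "\<And>y. R y \<ge> 0"
    and R_tendsto: "\<And>y l. (\<And>i. (\<lambda>k. y k i) \<longlonglongrightarrow> l i) \<Longrightarrow> (\<lambda>k. R (y k)) \<longlonglongrightarrow> R l"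
    and R_zero: "\<And>y. R y = 0 \<Longrightarrow> \<exists>z\<in>S. \<forall>i. y i = z"
  shows "\<exists>z\<in>S. \<forall>i. (x i \<longlongrightarrow> z) at_top"
proof -
  define V where "V z = (\<lambda>t. weighted_sq_dist w (\<lambda>i. x i t) z)" for z
  have V_nonneg: "V z t \<ge> 0" for z t
    unfolding V_def using w_pos by (intro weighted_sq_dist_nonneg less_imp_le)
  have V_deriv: "(V z has_real_derivative D z t) (at t within {0..})" if "z \<in> S" "t \<ge> 0" for z t
    using deriv[OF that] unfolding V_def .
  have V_antimono: "V z b \<le> V z a" if z: "z \<in> S" and "0 \<le> a" "a \<le> b" for z a b
  proof (rule antimono_of_deriv_nonpos[OF V_deriv[OF z]])
    show "D z t \<le> 0" if "t \<ge> 0" for t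
      using dissip[OF z that] R_nonneg[of "\<lambda>i. x i t"] by linarith
  qed (use \<open>0 \<le> a\<close> \<open>a \<le> b\<close> in auto)
  obtain s where s_nonneg: "\<And>k. s k \<ge> 0" and s: "filterlim s at_top sequentially"
    and R_s: "(\<lambda>k. R (\<lambda>i. x i (s k))) \<longlonglongrightarrow> 0"
    using dissipation_small_along_sequence[OF V_deriv[OF \<open>z0 \<in> S\<close>] dissip[OF \<open>z0 \<in> S\<close>]
        V_nonneg R_nonneg]
    by blast
  have bounded: "norm (x i (s k)) \<le> norm z0 + sqrt (V z0 0 / w i)" for i k
    using w_pos V_antimono[OF \<open>z0 \<in> S\<close> order.refl s_nonneg] unfolding V_def
    by (rule norm_le_of_weighted_sq_dist_le)
  obtain r l where r: "strict_mono r" and lim: "\<And>i. (\<lambda>k. x i (s (r k))) \<longlonglongrightarrow> l i"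
    using finite_family_convergent_subseq[of "\<lambda>i k. x i (s k)", OF bounded] by blast
  have "(\<lambda>k. R (\<lambda>i. x i (s (r k)))) \<longlonglongrightarrow> 0"
    using LIMSEQ_subseq_LIMSEQ[OF R_s r] by (simp add: o_def)
  then have "R l = 0"
    using R_tendsto[of "\<lambda>k i. x i (s (r k))" l, OF lim] LIMSEQ_unique by blast
  then obtain z where "z \<in> S" and l_eq: "\<And>i. l i = z"
    using R_zero by blast
  have "(\<lambda>k. V z (s (r k))) \<longlonglongrightarrow> (\<Sum>i\<in>UNIV. w i * (norm (l i - z))\<^sup>2)"
    unfolding V_def weighted_sq_dist_def by (intro tendsto_intros lim)
  then have "(\<lambda>k. V z (s (r k))) \<longlonglongrightarrow> 0"
    by (simp add: l_eq)
  moreover have "filterlim (\<lambda>k. s (r k)) at_top sequentially"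
    by (rule filterlim_compose[OF s filterlim_subseq[OF r]])
  ultimately have "(x i \<longlongrightarrow> z) at_top" for i
    using V_antimono[OF \<open>z \<in> S\<close>] w_pos
    unfolding V_def by (intro tendsto_of_weighted_sq_dist_antimono[where s="\<lambda>k. s (r k)"]) auto
  with \<open>z \<in> S\<close> show ?thesis by blast
qed

lemma projected_consensus_flow_converges:
  fixes A :: "'n::finite \<Rightarrow> 'n \<Rightarrow> real" and x :: "'n \<Rightarrow> real \<Rightarrow> 'a::euclidean_space"
  assumes A_nonneg: "\<And>i j. A i j \<ge> 0" and strong: "strongly_connected A"
    and g_cont: "\<And>i. continuous_on UNIV (g i)"
    and X_closed: "\<And>i. closed (X i)" and X_convex: "\<And>i. convex (X i)"
    and z0: "z0 \<in> cfp_solutions g X"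
    and dg_subplus: "\<And>i z. is_subgradient (pos_part_fun (g i)) z (dg i z)"
    and tau_pos: "\<tau> > 0"
    and field: "\<And>i t. t \<ge> 0 \<Longrightarrow>
      (x i has_vector_derivative projected_consensus_field A \<tau> X dg (\<lambda>j. x j t) i) (at t within {0..})"
  shows "\<exists>xs\<in>cfp_solutions g X. \<forall>i. (x i \<longlongrightarrow> xs) at_top"
proof -
  obtain w where w_pos: "\<And>i. w i > 0" and bal: "balancing w A"
    using balancing_positive_exists[where A=A, OF A_nonneg strong] by blast
  have X_ne: "\<And>i. X i \<noteq> {}"
    using z0 unfolding cfp_solutions_def by blast
  show ?thesis
  proof (rule lyapunov_consensus_convergence[where w=w, OF w_pos z0])
    show "((\<lambda>t. weighted_sq_dist w (\<lambda>i. x i t) z) has_real_derivative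
        (\<Sum>i\<in>UNIV. w i * (2 * inner (projected_consensus_field A \<tau> X dg (\<lambda>j. x j t) i) (x i t - z))))
        (at t within {0..})" if "t \<ge> 0" for z t
      using field[OF that] by (rule has_real_derivative_weighted_sq_dist)
    show "(\<Sum>i\<in>UNIV. w i * (2 * inner (projected_consensus_field A \<tau> X dg (\<lambda>j. x j t) i) (x i t - z)))
        \<le> - dissipation_rate w A \<tau> X g (\<lambda>i. x i t)" if "z \<in> cfp_solutions g X" for z t
      using that w_pos tau_pos X_convex X_closed dg_subplus unfolding cfp_solutions_def
      by (intro projected_consensus_dissipation[OF bal]) (auto intro: less_imp_le)
    show "dissipation_rate w A \<tau> X g y \<ge> 0" for y
      using w_pos A_nonneg tau_pos by (intro dissipation_rate_nonneg) (auto intro: less_imp_le)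
    show "(\<lambda>k. dissipation_rate w A \<tau> X g (y k)) \<longlonglongrightarrow> dissipation_rate w A \<tau> X g l"
      if "\<And>i. (\<lambda>k. y k i) \<longlonglongrightarrow> l i" for y l
      using X_convex X_closed X_ne g_cont that by (rule dissipation_rate_tendsto)
    show "\<exists>z\<in>cfp_solutions g X. \<forall>i. y i = z" if "dissipation_rate w A \<tau> X g y = 0" for y
      using dissipation_rate_eq_0_imp_consensus_solution[where w=w and A=A and X=X and y=y,
          OF w_pos A_nonneg strong tau_pos X_closed X_ne that]
      by blast
  qed
qed

theorem theorem3:
  fixes A :: "'n::finite \<Rightarrow> 'n \<Rightarrow> real"
    and g :: "'n \<Rightarrow> 'a::euclidean_space \<Rightarrow> real"
    and X :: "'n \<Rightarrow> 'a set"
    and dg :: "'n \<Rightarrow> 'a \<Rightarrow> 'a"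
    and x :: "'n \<Rightarrow> real \<Rightarrow> 'a"
    and \<tau> :: real
  assumes A_nonneg: "\<And>i j. A i j \<ge> 0"
    and strong: "strongly_connected A"
    and g_convex: "\<And>i. convex_on UNIV (g i)"
    and g_cont: "\<And>i. continuous_on UNIV (g i)"
    and X_closed: "\<And>i. closed (X i)"
    and X_convex: "\<And>i. convex (X i)"
    and sol_nonempty: "cfp_solutions g X \<noteq> {}"
    and dg_zero: "\<And>i z. g i z \<le> 0 \<Longrightarrow> dg i z = 0"
    and dg_sub: "\<And>i z. g i z > 0 \<Longrightarrow> is_subgradient (g i) z (dg i z)"
    and dg_subplus: "\<And>i z. is_subgradient (pos_part_fun (g i)) z (dg i z)"
    and dg_pw: "\<And>i. piecewise_continuous (dg i)"
    and tau_pos: "\<tau> > 0"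
    and ode: "\<And>i t. t \<ge> 0 \<Longrightarrow>
      (x i has_vector_derivative
         ((\<Sum>j\<in>neighbors A i. A i j *\<^sub>R (x j t - x i t))
          - \<tau> *\<^sub>R ((x i t - closest_point (X i) (x i t)) + dg i (x i t))))
      (at t within {0..})"
  shows "(\<forall>i j. ((\<lambda>t. norm (x i t - x j t)) \<longlongrightarrow> 0) at_top) \<and>
         (\<exists>xs\<in>cfp_solutions g X. \<forall>i. (x i \<longlongrightarrow> xs) at_top)"
proof -
  obtain z0 where z0: "z0 \<in> cfp_solutions g X"
    using sol_nonempty by blast
  have field: "(x i has_vector_derivative projected_consensus_field A \<tau> X dg (\<lambda>j. x j t) i)
      (at t within {0..})" if "t \<ge> 0" for i t
    using ode[OF that, of i]
    unfolding projected_consensus_field_def sum_neighbors_eq_sum[where A=A and i=i, OF A_nonneg] .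
  obtain xs where "xs \<in> cfp_solutions g X" and lim: "\<And>i. (x i \<longlongrightarrow> xs) at_top"
    using projected_consensus_flow_converges[where A=A and X=X and g=g and dg=dg and x=x,
        OF A_nonneg strong g_cont X_closed X_convex z0 dg_subplus tau_pos field]
    by blast
  moreover have "((\<lambda>t. norm (x i t - x j t)) \<longlongrightarrow> 0) at_top" for i j
    using tendsto_norm[OF tendsto_diff[OF lim lim]] by simp
  ultimately show ?thesis by blast
qed

end
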